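(* Let $n,m\ge 1$, $V_{th}>0$, $\Delta t_d>0$, $\mathbf{W}\in\mathbb{R}^{n\times n}$, $\mathbf{F}\in\mathbb{R}^{n\times m}$, $\mathbf{b}\in\mathbb{R}^n$. Consider a feedback spiking neural network of $n$ neurons with the continuous integrate-and-fire (IF) model, whose membrane potentials $\mathbf{u}(t)\in\mathbb{R}^n$ evolve as $$\frac{\mathrm{d}\mathbf{u}}{\mathrm{d}t}=\mathbf{W}\mathbf{s}(t-\Delta t_d)+\mathbf{F}\mathbf{x}(t)+\mathbf{b}-V_{th}\mathbf{s}(t),$$ where $\mathbf{x}(t)\in\mathbb{R}^m$ is the input and $\mathbf{s}(t)$ is the vector of output spike trains (sums of Dirac deltas at the times a neuron's potential reaches $V_{th}$, after which it is reduced by $V_{th}$). Let $\mathbf{a}(t)=\frac1t\int_0^t\mathbf{s}(\tau)\,\mathrm{d}\tau$ be the average firing rates and $\overline{\mathbf{x}}(t)=\frac1t\int_0^t\mathbf{x}(\tau)\,\mathrm{d}\tau$ the average inputs. Let $\mathbf{u}^+(t)\in\mathbb{R}^n$ denote the (positive) part of the membrane potential for which $$\mathbf{a}(t)=\mathrm{ReLU}\!\left(\frac{1}{V_{th}}\left(\frac{t-\Delta t_d}{t}\mathbf{W}\mathbf{a}(t-\Delta t_d)+\mathbf{F}\overline{\mathbf{x}}(t)+\mathbf{b}-\frac{\mathbf{u}^+(t)}{t}\right)\right)$$ holds. Suppose that $\overline{\mathbf{x}}(t)\to\mathbf{x}^*$ as $t\to\infty$, and that there exist constants $c$ and $\gamma<1$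 such that $|\mathbf{u}^+_i(t)|\le c$ for all $i,t$ and $\|\mathbf{W}\|_2\le\gamma V_{th}$. Then $\mathbf{a}(t)$ converges as $t\to\infty$ to a point $\mathbf{a}^*$ satisfying $$\mathbf{a}^*=\mathrm{ReLU}\!\left(\frac{1}{V_{th}}\left(\mathbf{W}\mathbf{a}^*+\mathbf{F}\mathbf{x}^*+\mathbf{b}\right)\right).$$
   Context: $\mathrm{ReLU}(x)=\max(x,0)$ applied elementwise; $\|\cdot\|_2$ is the spectral (operator 2-) norm. In the paper the membrane potential is decomposed as $\mathbf{u}_i(t)=\mathbf{u}^-_i(t)+\mathbf{u}^+_i(t)$, where $\frac1t\mathbf{u}^-_i(t)=\min(v_i(t),0)$ with $v(t)=\frac{t-\Delta t_d}{t}\mathbf{W}\mathbf{a}(t-\Delta t_d)+\mathbf{F}\overline{\mathbf{x}}(t)+\mathbf{b}$ is the accumulated negative term, and $\mathbf{u}^+(t)$ is the remainder; with this decomposition the displayed ReLU relation for $\mathbf{a}(t)$ holds. *)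

theory Defs
  imports "HOL-Analysis.Analysis"
begin

definition relu :: "real^'n \<Rightarrow> real^'n" where
  "relu v = (\<chi> i. max (v $ i) 0)"

text \<open>Spike trains: neuron i emits a Dirac delta at each time in spk i (all times \<ge> 0).
  The integral of s_i over [0,t] is the number of spikes in [0,t], so the average
  firing rate is a_i(t) = card (spk i \<inter> {0..t}) / t  (which is 0 for t \<le> 0,
  matching s = 0 before time 0).\<close>
definition avg_rate :: "('n \<Rightarrow> real set) \<Rightarrow> real \<Rightarrow> real^'n" where
  "avg_rate spk t = (\<chi> i. real (card (spk i \<inter> {0..t})) / t)"

definition avg_input :: "(real \<Rightarrow> real^'m) \<Rightarrow> real \<Rightarrow> real^'m" where
  "avg_input x t = (1 / t) *\<^sub>R integral {0..t} x"

end

theory Submission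
  imports Defs
begin

text \<open>Since relu is 1-Lipschitz and the operator norm of W is at most \<gamma> Vth, the map
  v \<mapsto> relu ((W v + F x* + b) / Vth) is a \<gamma>-contraction; its fixed point is a*.
  Comparing the rate relation at time t with the fixed-point equation gives, for
  e(t) = |a(t) - a*|, the delayed contraction e(t) \<le> \<gamma> e(t - \<Delta>) + R(t), where
  R(t) = O(1/t) + O(|xbar(t) - x*|) \<rightarrow> 0 by the bound on u+. Iterating it over consecutive
  windows of length \<Delta> forces e(t) \<rightarrow> 0.\<close>

lemma norm_relu_diff_le: "norm (relu u - relu v) \<le> norm (u - v)"
  by (rule norm_le_componentwise_cart) (simp add: relu_def)

lemma norm_matrix_vector_mult_le:
  fixes A :: "real^'n^'m"
  assumes "onorm (\<lambda>v. A *v v) \<le> C"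
  shows "norm (A *v v) \<le> C * norm v"
  using onorm[OF matrix_vector_mul_bounded_linear[of A], of v] assms
  by (meson mult_right_mono norm_ge_zero order_trans)

lemma nonneg_if_onorm_matrix_le:
  fixes W :: "real^'n^'m"
  assumes "V > 0" "onorm (\<lambda>v. W *v v) \<le> \<gamma> * V"
  shows "0 \<le> \<gamma>"
proof -
  have "0 \<le> \<gamma> * V"
    using assms(2) onorm_pos_le[OF matrix_vector_mul_bounded_linear[of W]] by linarith
  then show ?thesis
    using \<open>V > 0\<close> by (simp add: zero_le_mult_iff)
qed

lemma relu_affine_dist_le:
  fixes W :: "real^'n^'n" and a a' p q :: "real^'n"
  assumes V: "V > 0" and s: "0 \<le> s" "s \<le> 1"
    and W_norm: "onorm (\<lambda>v. W *v v) \<le> \<gamma> * V"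
  shows "norm (relu ((1 / V) *\<^sub>R (s *\<^sub>R (W *v a') + p)) - relu ((1 / V) *\<^sub>R (W *v a + q)))
         \<le> \<gamma> * norm (a' - a) + (1 - s) * \<gamma> * norm a + norm (p - q) / V"
proof -
  have \<gamma>V: "0 \<le> \<gamma> * V"
    using nonneg_if_onorm_matrix_le[OF V W_norm] V by simp
  have "norm (relu ((1 / V) *\<^sub>R (s *\<^sub>R (W *v a') + p)) - relu ((1 / V) *\<^sub>R (W *v a + q)))
      \<le> norm ((1 / V) *\<^sub>R (s *\<^sub>R (W *v a') + p) - (1 / V) *\<^sub>R (W *v a + q))"
    by (rule norm_relu_diff_le)
  also have "(1 / V) *\<^sub>R (s *\<^sub>R (W *v a') + p) - (1 / V) *\<^sub>R (W *v a + q)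
        = (1 / V) *\<^sub>R (s *\<^sub>R (W *v (a' - a)) - (1 - s) *\<^sub>R (W *v a) + (p - q))"
    by (simp add: algebra_simps matrix_vector_mult_diff_distrib)
  also have "norm \<dots> = (1 / V) * norm (s *\<^sub>R (W *v (a' - a)) - (1 - s) *\<^sub>R (W *v a) + (p - q))"
    using V by simp
  also have "\<dots> \<le> (1 / V) * (s * norm (W *v (a' - a)) + (1 - s) * norm (W *v a) + norm (p - q))"
  proof (rule mult_left_mono)
    show "norm (s *\<^sub>R (W *v (a' - a)) - (1 - s) *\<^sub>R (W *v a) + (p - q))
        \<le> s * norm (W *v (a' - a)) + (1 - s) * norm (W *v a) + norm (p - q)"
      using s norm_triangle_ineq[of "s *\<^sub>R (W *v (a' - a)) - (1 - s) *\<^sub>R (W *v a)" "p - q"]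
        norm_triangle_ineq4[of "s *\<^sub>R (W *v (a' - a))" "(1 - s) *\<^sub>R (W *v a)"]
      by simp
  qed (use V in simp)
  also have "\<dots> \<le> (1 / V) * (\<gamma> * V * norm (a' - a) + (1 - s) * (\<gamma> * V * norm a) + norm (p - q))"
  proof -
    have "s * norm (W *v (a' - a)) \<le> \<gamma> * V * norm (a' - a)"
      using s \<gamma>V norm_matrix_vector_mult_le[OF W_norm, of "a' - a"]
      by (metis mult_left_le_one_le norm_ge_zero order_trans)
    moreover have "(1 - s) * norm (W *v a) \<le> (1 - s) * (\<gamma> * V * norm a)"
      using s norm_matrix_vector_mult_le[OF W_norm, of a] by (intro mult_left_mono) auto
    ultimately show ?thesis
      using V by (intro mult_left_mono) auto
  qed
  also have "\<dots> = \<gamma> * norm (a' - a) + (1 - s) * \<gamma> * norm a + norm (p - q) / V"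
    using V by (simp add: field_simps)
  finally show ?thesis .
qed

lemma relu_affine_fixed_point_exists:
  fixes W :: "real^'n^'n" and q :: "real^'n"
  assumes "V > 0" "\<gamma> < 1" and W_norm: "onorm (\<lambda>v. W *v v) \<le> \<gamma> * V"
  shows "\<exists>a. a = relu ((1 / V) *\<^sub>R (W *v a + q))"
proof -
  have "0 \<le> \<gamma>"
    using nonneg_if_onorm_matrix_le[OF \<open>V > 0\<close> W_norm] .
  moreover have "\<forall>u v. dist (relu ((1 / V) *\<^sub>R (W *v u + q))) (relu ((1 / V) *\<^sub>R (W *v v + q)))
                   \<le> \<gamma> * dist u v"
    using relu_affine_dist_le[OF \<open>V > 0\<close> _ _ W_norm, where s = 1 and p = q and q = q]
    by (simp add: dist_norm)
  ultimately have "\<exists>!a. relu ((1 / V) *\<^sub>R (W *v a + q)) = a"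
    by (intro banach_fix_type[OF _ \<open>\<gamma> < 1\<close>])
  then show ?thesis
    by metis
qed

lemma norm_le_card_mult_if_abs_components_le:
  fixes v :: "real^'n"
  assumes "\<And>i. \<bar>v $ i\<bar> \<le> c"
  shows "norm v \<le> real CARD('n) * c"
proof -
  have "norm v \<le> (\<Sum>i\<in>UNIV. \<bar>v $ i\<bar>)"
    by (rule norm_le_l1_cart)
  also have "\<dots> \<le> (\<Sum>i\<in>(UNIV::'n set). c)"
    using assms by (rule sum_mono)
  finally show ?thesis
    by simp
qed

lemma delayed_rate_error_le:
  fixes W :: "real^'n^'n" and F :: "real^'m^'n" and a a' astar b u :: "real^'n"
    and xb xstar :: "real^'m"
  assumes V: "Vth > 0" and "0 < dtd" "dtd \<le> t"
    and W_norm: "onorm (\<lambda>v. W *v v) \<le> \<gamma> * Vth"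
    and a_rel: "a = relu ((1 / Vth) *\<^sub>R (((t - dtd) / t) *\<^sub>R (W *v a') + F *v xb + b - (1 / t) *\<^sub>R u))"
    and astar_fix: "astar = relu ((1 / Vth) *\<^sub>R (W *v astar + (F *v xstar + b)))"
    and "norm u \<le> U"
  shows "norm (a - astar) \<le> \<gamma> * norm (a' - astar) + (dtd * \<gamma> * norm astar + U / Vth) / t
           + onorm (\<lambda>v. F *v v) / Vth * dist xb xstar"
proof -
  define s where "s = (t - dtd) / t"
  define p where "p = F *v xb + b - (1 / t) *\<^sub>R u"
  have "t > 0" "0 \<le> s" "s \<le> 1" "1 - s = dtd / t"
    using \<open>0 < dtd\<close> \<open>dtd \<le> t\<close> by (auto simp: s_def field_simps)
  have "norm (p - (F *v xstar + b)) = norm (F *v (xb - xstar) - (1 / t) *\<^sub>R u)"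
    by (simp add: p_def algebra_simps matrix_vector_mult_diff_distrib)
  also have "\<dots> \<le> onorm (\<lambda>v. F *v v) * dist xb xstar + norm u / t"
  proof -
    have "norm (F *v (xb - xstar)) \<le> onorm (\<lambda>v. F *v v) * dist xb xstar"
      using norm_matrix_vector_mult_le[OF order_refl] by (simp add: dist_norm)
    then show ?thesis
      using norm_triangle_ineq4[of "F *v (xb - xstar)" "(1 / t) *\<^sub>R u"] \<open>t > 0\<close> by simp
  qed
  also have "\<dots> \<le> onorm (\<lambda>v. F *v v) * dist xb xstar + U / t"
    using \<open>norm u \<le> U\<close> \<open>t > 0\<close> by (simp add: divide_right_mono)
  finally have p: "norm (p - (F *v xstar + b)) \<le> onorm (\<lambda>v. F *v v) * dist xb xstar + U / t" .
  have "a = relu ((1 / Vth) *\<^sub>R (s *\<^sub>R (W *v a') + p))"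
    using a_rel by (simp add: s_def p_def algebra_simps)
  then have "norm (a - astar)
      \<le> \<gamma> * norm (a' - astar) + (1 - s) * \<gamma> * norm astar + norm (p - (F *v xstar + b)) / Vth"
    using relu_affine_dist_le[OF V \<open>0 \<le> s\<close> \<open>s \<le> 1\<close> W_norm, of a' p astar "F *v xstar + b"]
      astar_fix by simp
  also have "\<dots> \<le> \<gamma> * norm (a' - astar) + (1 - s) * \<gamma> * norm astar
                  + (onorm (\<lambda>v. F *v v) * dist xb xstar + U / t) / Vth"
    using p V by (simp add: divide_right_mono)
  also have "\<dots> = \<gamma> * norm (a' - astar) + (dtd * \<gamma> * norm astar + U / Vth) / t
           + onorm (\<lambda>v. F *v v) / Vth * dist xb xstar"
    unfolding \<open>1 - s = dtd / t\<close> using \<open>t > 0\<close> V by (simp add: field_simps)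
  finally show ?thesis .
qed

lemma delayed_recursion_window_bound:
  fixes e R :: "real \<Rightarrow> real"
  assumes "d > 0" "0 \<le> \<gamma>" "0 \<le> \<eta>"
    and rec: "\<And>t. T + d \<le> t \<Longrightarrow> e t \<le> \<gamma> * e (t - d) + R t"
    and small: "\<And>t. T + d \<le> t \<Longrightarrow> R t \<le> \<eta> * (1 - \<gamma>)"
    and base: "\<And>t. T \<le> t \<Longrightarrow> t \<le> T + d \<Longrightarrow> e t \<le> B"
  shows "T + real k * d \<le> t \<Longrightarrow> t \<le> T + real (Suc k) * d \<Longrightarrow> e t \<le> \<gamma> ^ k * B + \<eta>"
proof (induction k arbitrary: t)
  case 0
  then have "e t \<le> B"
    by (intro base) auto
  then show ?case
    using \<open>0 \<le> \<eta>\<close> by simp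
next
  case (Suc k)
  have "d \<le> real (Suc k) * d"
    using \<open>d > 0\<close> by simp
  then have "T + d \<le> t"
    using Suc.prems(1) by linarith
  have "e (t - d) \<le> \<gamma> ^ k * B + \<eta>"
    using Suc.prems by (intro Suc.IH) (auto simp: algebra_simps)
  have "e t \<le> \<gamma> * e (t - d) + R t"
    using rec[OF \<open>T + d \<le> t\<close>] .
  also have "\<dots> \<le> \<gamma> * (\<gamma> ^ k * B + \<eta>) + \<eta> * (1 - \<gamma>)"
    using \<open>e (t - d) \<le> _\<close> small[OF \<open>T + d \<le> t\<close>] \<open>0 \<le> \<gamma>\<close> by (intro add_mono mult_left_mono)
  also have "\<dots> = \<gamma> ^ Suc k * B + \<eta>"
    by (simp add: algebra_simps)
  finally show ?case .
qed

lemma real_window_index: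
  assumes "d > 0" "T + real K * d \<le> t"
  obtains k where "K \<le> k" "T + real k * d \<le> t" "t \<le> T + real (Suc k) * d"
proof
  define k where "k = nat \<lfloor>(t - T) / d\<rfloor>"
  have "real K \<le> (t - T) / d"
    using assms by (simp add: field_simps)
  then have K: "int K \<le> \<lfloor>(t - T) / d\<rfloor>"
    by (simp add: le_floor_iff)
  then have k: "real k = of_int \<lfloor>(t - T) / d\<rfloor>"
    by (simp add: k_def)
  show "K \<le> k"
    using K by (simp add: k_def)
  have "real k \<le> (t - T) / d" "(t - T) / d < real k + 1"
    using k by linarith+
  then show "T + real k * d \<le> t" "t \<le> T + real (Suc k) * d"
    using \<open>d > 0\<close> by (simp_all add: field_simps)
qed

lemma delayed_contraction_tendsto_zero:
  fixes e R :: "real \<Rightarrow> real"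
  assumes "d > 0" "0 \<le> \<gamma>" "\<gamma> < 1"
    and nonneg: "\<And>t. 0 \<le> e t"
    and rec: "\<And>t. T \<le> t \<Longrightarrow> e t \<le> \<gamma> * e (t - d) + R t"
    and bdd: "\<And>S. T \<le> S \<Longrightarrow> bdd_above (e ` {S..S + d})"
    and R: "(R \<longlongrightarrow> 0) at_top"
  shows "(e \<longlongrightarrow> 0) at_top"
proof (rule order_tendstoI)
  fix \<epsilon> :: real
  assume "\<epsilon> < 0"
  then show "\<forall>\<^sub>F t in at_top. \<epsilon> < e t"
    using nonneg by (intro always_eventually allI) (rule less_le_trans)
next
  fix \<epsilon> :: real
  assume "0 < \<epsilon>"
  define \<eta> where "\<eta> = \<epsilon> / 2"
  have "\<eta> > 0" "\<eta> * (1 - \<gamma>) > 0"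
    using \<open>0 < \<epsilon>\<close> \<open>\<gamma> < 1\<close> by (auto simp: \<eta>_def)
  obtain T1 where T1: "\<And>t. T1 \<le> t \<Longrightarrow> R t < \<eta> * (1 - \<gamma>)"
    using order_tendstoD(2)[OF R \<open>\<eta> * (1 - \<gamma>) > 0\<close>] by (auto simp: eventually_at_top_linorder)
  define T0 where "T0 = max T T1"
  have "bdd_above (e ` {T0..T0 + d})"
    by (rule bdd) (simp add: T0_def)
  then obtain B where B: "\<And>t. T0 \<le> t \<Longrightarrow> t \<le> T0 + d \<Longrightarrow> e t \<le> B"
    unfolding bdd_above_def by (meson atLeastAtMost_iff imageI)
  have window: "e t \<le> \<gamma> ^ k * B + \<eta>"
    if "T0 + real k * d \<le> t" "t \<le> T0 + real (Suc k) * d" for k t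
  proof (rule delayed_recursion_window_bound[OF \<open>d > 0\<close> \<open>0 \<le> \<gamma>\<close> _ _ _ B that])
    show "0 \<le> \<eta>" using \<open>\<eta> > 0\<close> by simp
    show "e t \<le> \<gamma> * e (t - d) + R t" if "T0 + d \<le> t" for t
      using that \<open>d > 0\<close> by (intro rec) (simp add: T0_def)
    show "R t \<le> \<eta> * (1 - \<gamma>)" if "T0 + d \<le> t" for t
      using that \<open>d > 0\<close> by (intro less_imp_le T1) (simp add: T0_def)
  qed
  have "(\<lambda>k. \<gamma> ^ k * B) \<longlonglongrightarrow> 0"
    using \<open>0 \<le> \<gamma>\<close> \<open>\<gamma> < 1\<close> by (intro tendsto_mult_left_zero LIMSEQ_power_zero) simp
  from order_tendstoD(2)[OF this \<open>\<eta> > 0\<close>]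
  obtain K where K: "\<And>k. K \<le> k \<Longrightarrow> \<gamma> ^ k * B < \<eta>"
    by (auto simp: eventually_sequentially)
  have "e t < \<epsilon>" if t: "T0 + real K * d \<le> t" for t
  proof -
    obtain k where "K \<le> k" "T0 + real k * d \<le> t" "t \<le> T0 + real (Suc k) * d"
      using real_window_index[OF \<open>d > 0\<close> t] .
    then have "e t \<le> \<gamma> ^ k * B + \<eta>" "\<gamma> ^ k * B < \<eta>"
      using window K by auto
    then show ?thesis
      by (simp add: \<eta>_def)
  qed
  then show "\<forall>\<^sub>F t in at_top. e t < \<epsilon>"
    by (auto simp: eventually_at_top_linorder)
qed

lemma norm_avg_rate_le:
  assumes fin: "\<And>i. finite (spk i \<inter> {0..U})" and "0 < L" "L \<le> t" "t \<le> U"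
  shows "norm (avg_rate spk t) \<le> (\<Sum>i\<in>UNIV. real (card (spk i \<inter> {0..U})) / L)"
proof -
  have "norm (avg_rate spk t) \<le> (\<Sum>i\<in>UNIV. \<bar>avg_rate spk t $ i\<bar>)"
    by (rule norm_le_l1_cart)
  also have "\<dots> \<le> (\<Sum>i\<in>UNIV. real (card (spk i \<inter> {0..U})) / L)"
  proof (rule sum_mono)
    fix i
    have "card (spk i \<inter> {0..t}) \<le> card (spk i \<inter> {0..U})"
      using \<open>t \<le> U\<close> by (intro card_mono fin) auto
    then have "real (card (spk i \<inter> {0..t})) / t \<le> real (card (spk i \<inter> {0..U})) / L"
      using \<open>0 < L\<close> \<open>L \<le> t\<close> by (intro frac_le) auto
    then show "\<bar>avg_rate spk t $ i\<bar> \<le> real (card (spk i \<inter> {0..U})) / L"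
      using \<open>0 < L\<close> \<open>L \<le> t\<close> by (simp add: avg_rate_def)
  qed
  finally show ?thesis .
qed

lemma bdd_above_norm_avg_rate_diff:
  assumes "\<And>i. finite (spk i \<inter> {0..S + d})" "0 < S"
  shows "bdd_above ((\<lambda>t. norm (avg_rate spk t - a)) ` {S..S + d})"
proof (rule bdd_aboveI2)
  fix t
  assume "t \<in> {S..S + d}"
  then have "norm (avg_rate spk t) \<le> (\<Sum>i\<in>UNIV. real (card (spk i \<inter> {0..S + d})) / S)"
    using assms by (intro norm_avg_rate_le) auto
  then show "norm (avg_rate spk t - a) \<le> (\<Sum>i\<in>UNIV. real (card (spk i \<inter> {0..S + d})) / S) + norm a"
    by (intro norm_triangle_le_diff) simp
qed

theorem theorem1:
  fixes Vth dtd c \<gamma> :: real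
    and W :: "real^'n^'n" and F :: "real^'m^'n" and b :: "real^'n"
    and x :: "real \<Rightarrow> real^'m" and xstar :: "real^'m"
    and spk :: "'n \<Rightarrow> real set" and up :: "real \<Rightarrow> real^'n"
  assumes Vth_pos: "Vth > 0"
    and dtd_pos: "dtd > 0"
    and x_int: "\<And>t. t \<ge> 0 \<Longrightarrow> x integrable_on {0..t}"
    and spk_nonneg: "\<And>i. spk i \<subseteq> {0..}"
    and spk_fin: "\<And>i t. finite (spk i \<inter> {0..t})"
    and relation: "\<And>t. t > 0 \<Longrightarrow>
       avg_rate spk t = relu ((1 / Vth) *\<^sub>R
          (((t - dtd) / t) *\<^sub>R (W *v avg_rate spk (t - dtd))
           + F *v avg_input x t + b - (1 / t) *\<^sub>R up t))"
    and xbar_lim: "(avg_input x \<longlongrightarrow> xstar) at_top"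
    and up_bound: "\<And>i t. \<bar>up t $ i\<bar> \<le> c"
    and gamma_lt: "\<gamma> < 1"
    and W_norm: "onorm (\<lambda>v. W *v v) \<le> \<gamma> * Vth"
  shows "\<exists>astar. (avg_rate spk \<longlongrightarrow> astar) at_top \<and>
           astar = relu ((1 / Vth) *\<^sub>R (W *v astar + F *v xstar + b))"
proof -
  obtain astar where astar: "astar = relu ((1 / Vth) *\<^sub>R (W *v astar + (F *v xstar + b)))"
    using relu_affine_fixed_point_exists[OF Vth_pos gamma_lt W_norm] by blast
  define e where "e t = norm (avg_rate spk t - astar)" for t
  have e_nonneg: "0 \<le> e t" for t
    by (simp add: e_def)
  define R where "R t = (dtd * \<gamma> * norm astar + real CARD('n) * c / Vth) / t
                       + onorm (\<lambda>v. F *v v) / Vth * dist (avg_input x t) xstar" for t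
  have "e t \<le> \<gamma> * e (t - dtd) + R t" if "dtd \<le> t" for t
    using delayed_rate_error_le[OF Vth_pos dtd_pos that W_norm relation astar
        norm_le_card_mult_if_abs_components_le[OF up_bound]] dtd_pos that
    by (simp add: e_def R_def add.assoc)
  moreover have "bdd_above (e ` {S..S + dtd})" if "dtd \<le> S" for S
    unfolding e_def using dtd_pos that by (intro bdd_above_norm_avg_rate_diff spk_fin) auto
  moreover have "(R \<longlongrightarrow> 0) at_top"
    unfolding R_def using tendsto_dist_iff[THEN iffD1, OF xbar_lim]
    by (intro tendsto_add_zero tendsto_mult_right_zero
        tendsto_divide_0[OF tendsto_const filterlim_at_top_imp_at_infinity[OF filterlim_ident]])
  ultimately have "(e \<longlongrightarrow> 0) at_top"
    by (rule delayed_contraction_tendsto_zero[OF dtd_pos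
          nonneg_if_onorm_matrix_le[OF Vth_pos W_norm] gamma_lt e_nonneg])
  then have "(avg_rate spk \<longlongrightarrow> astar) at_top"
    unfolding e_def tendsto_norm_zero_iff by (rule LIM_zero_cancel)
  then show ?thesis
    using astar by (auto simp: add.assoc)
qed

end
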